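(* Let $\mathbb{F}$ be a field, $m,b\in\mathbb{F}$ with $m\neq0$, $m\neq1$. Consider the reduction system $\Gamma$ in $\mathbb{F}\langle A,B,C\rangle$ consisting of the pairs $\alpha=\left(AB,\frac{mC-bI}{m-1}\right)$, $\beta=(AC,mCA)$, $\gamma=\left(BA,\frac{C-bI}{m-1}\right)$, $\delta=(CB,mBC)$, and $\varepsilon(k)=\left(BC^kA,\frac{C^{k+1}-bC^k}{m^k(m-1)}\right)$ for $k=1,2,\ldots$. Then $\Gamma$ has no inclusion ambiguities and every (overlap) ambiguity of $\Gamma$ is resolvable.
   Context: A reduction system in $\mathbb{F}\langle A,B,C\rangle$ is a set $S$ of pairs $\mu=(W_\mu,f_\mu)$ with $W_\mu$ a word (element of the free monoid on $A,B,C$) and $f_\mu\in\mathbb{F}\langle A,B,C\rangle$. For words $L,R$ and $\mu\in S$, the reduction $r_{L\mu R}$ is the linear map of $\mathbb{F}\langle A,B,C\rangle$ fixing every word except $LW_\mu R$, which it sends to $Lf_\mu R$. An overlap ambiguity is a tuple $(\mu,\nu,L,X,R)$ with $\mu,\nu\in S$, $L,X,R$ nonempty words, $W_\mu=LX$, $W_\nu=XR$; it is resolvable if there are finite compositions of reductions $\lambda,\rho$ with $\lambda(f_\mu R)=\rho(Lf_\nu)$. An inclusion ambiguity is $(\mu,\nu,L,X,R)$ with $\mu\ne\nu$, $W_\mu=X$, $W_\nu=LXR$; it is resolvable if $\lambda(Lf_\mu R)=\rho(f_\nu)$ for some compositions of reductions $\lambda,\rho$. *)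

theory Defs
  imports Main "HOL-Library.Poly_Mapping"
begin

text \<open>The free algebra F<A,B,C>: finitely supported functions from words
  (lists of letters) to the field.\<close>

datatype letter = LA | LB | LC

type_synonym word = "letter list"
type_synonym 'a falg = "word \<Rightarrow>\<^sub>0 'a"

definition mon :: "word \<Rightarrow> 'a::zero \<Rightarrow> 'a falg" where
  "mon w c = Poly_Mapping.single w c"

definition scal :: "'a::semiring_0 \<Rightarrow> 'a falg \<Rightarrow> 'a falg" where
  "scal a f = Poly_Mapping.map (\<lambda>c. a * c) f"

definition sandwich :: "word \<Rightarrow> 'a::comm_monoid_add falg \<Rightarrow> word \<Rightarrow> 'a falg" where
  "sandwich L f R = (\<Sum>u\<in>Poly_Mapping.keys f. Poly_Mapping.single (L @ u @ R) (Poly_Mapping.lookup f u))"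

type_synonym 'a rule = "word \<times> 'a falg"

definition red :: "word \<Rightarrow> 'a::ring_1 rule \<Rightarrow> word \<Rightarrow> 'a falg \<Rightarrow> 'a falg" where
  "red L \<mu> R g =
     (let w = L @ fst \<mu> @ R; c = Poly_Mapping.lookup g w
      in g - Poly_Mapping.single w c + scal c (sandwich L (snd \<mu>) R))"

inductive_set reds :: "'a::ring_1 rule set \<Rightarrow> ('a falg \<Rightarrow> 'a falg) set" for S where
  reds_id: "id \<in> reds S"
| reds_step: "\<phi> \<in> reds S \<Longrightarrow> \<mu> \<in> S \<Longrightarrow> red L \<mu> R \<circ> \<phi> \<in> reds S"

definition overlap_amb :: "'a::ring_1 rule set \<Rightarrow> 'a rule \<Rightarrow> 'a rule \<Rightarrow> word \<Rightarrow> word \<Rightarrow> word \<Rightarrow> bool" where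
  "overlap_amb S \<mu> \<nu> L X R \<longleftrightarrow> \<mu> \<in> S \<and> \<nu> \<in> S \<and> L \<noteq> [] \<and> X \<noteq> [] \<and> R \<noteq> [] \<and>
     fst \<mu> = L @ X \<and> fst \<nu> = X @ R"

definition overlap_resolvable :: "'a::ring_1 rule set \<Rightarrow> 'a rule \<Rightarrow> 'a rule \<Rightarrow> word \<Rightarrow> word \<Rightarrow> word \<Rightarrow> bool" where
  "overlap_resolvable S \<mu> \<nu> L X R \<longleftrightarrow>
     (\<exists>lam\<in>reds S. \<exists>\<rho>\<in>reds S. lam (sandwich [] (snd \<mu>) R) = \<rho> (sandwich L (snd \<nu>) []))"

definition incl_amb :: "'a::ring_1 rule set \<Rightarrow> 'a rule \<Rightarrow> 'a rule \<Rightarrow> word \<Rightarrow> word \<Rightarrow> word \<Rightarrow> bool" where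
  "incl_amb S \<mu> \<nu> L X R \<longleftrightarrow> \<mu> \<in> S \<and> \<nu> \<in> S \<and> \<mu> \<noteq> \<nu> \<and> fst \<mu> = X \<and> fst \<nu> = L @ X @ R"

definition incl_resolvable :: "'a::ring_1 rule set \<Rightarrow> 'a rule \<Rightarrow> 'a rule \<Rightarrow> word \<Rightarrow> word \<Rightarrow> word \<Rightarrow> bool" where
  "incl_resolvable S \<mu> \<nu> L X R \<longleftrightarrow>
     (\<exists>lam\<in>reds S. \<exists>\<rho>\<in>reds S. lam (sandwich L (snd \<mu>) R) = \<rho> (snd \<nu>))"

definition Gamma :: "'a::field \<Rightarrow> 'a \<Rightarrow> 'a rule set" where
  "Gamma m b =
     {([LA, LB], scal (1 / (m - 1)) (mon [LC] m - mon [] b)),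
      ([LA, LC], mon [LC, LA] m),
      ([LB, LA], scal (1 / (m - 1)) (mon [LC] 1 - mon [] b)),
      ([LC, LB], mon [LB, LC] m)} \<union>
     {(LB # replicate k LC @ [LA],
       scal (1 / (m ^ k * (m - 1))) (mon (replicate (k + 1) LC) 1 - mon (replicate k LC) b))
      | k::nat. k \<ge> 1}"

end

theory Submission
  imports Defs
begin

text \<open>Every overlap of \<open>\<Gamma>\<close> is one of nine explicit words: \<open>ABA\<close>, \<open>ACB\<close>, \<open>BAB\<close>,
  \<open>BAC\<close>, \<open>CBA\<close>, \<open>ABC\<^sup>kA\<close>, \<open>CBC\<^sup>kA\<close>, \<open>BC\<^sup>kAB\<close>, \<open>BC\<^sup>kAC\<close>, and in each case the two
  one-step reductions are joined by a few further reductions. The short overlaps close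
  after at most one step, using \<open>\<epsilon>(1)\<close> for \<open>BAC\<close> and \<open>CBA\<close>; \<open>CBC\<^sup>kA\<close> and \<open>BC\<^sup>kAC\<close> close
  with \<open>\<epsilon>(k+1)\<close>, which is exactly why the family \<open>\<epsilon>(k)\<close> is infinite; for \<open>ABC\<^sup>kA\<close> and
  \<open>BC\<^sup>kAB\<close> one commutes \<open>A\<close> rightwards past \<open>C\<^sup>k\<close> with \<open>\<beta>\<close>, resp. \<open>B\<close> leftwards with \<open>\<delta>\<close>,
  and the powers \<open>m\<^sup>k\<close> cancel the denominators of \<open>\<epsilon>(k)\<close>. Inclusions cannot occur: the
  length-two words of \<open>\<Gamma>\<close> are not subwords of \<open>BC\<^sup>kA\<close>, and \<open>B\<close> and \<open>A\<close> occur in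
  \<open>BC\<^sup>kA\<close> only at its ends.\<close>

lemma lookup_scal: "Poly_Mapping.lookup (scal a f) w = a * Poly_Mapping.lookup f w"
  by (simp add: scal_def Poly_Mapping.map.rep_eq when_def)

lemma scal_diff: "scal (a::'a::ring) (f - g) = scal a f - scal a g"
  by (rule poly_mapping_eqI) (simp add: lookup_scal lookup_minus algebra_simps)

lemma scal_diff_left: "scal ((a::'a::ring) - c) f = scal a f - scal c f"
  by (rule poly_mapping_eqI) (simp add: lookup_scal lookup_minus algebra_simps)

lemma scal_zero_left [simp]: "scal 0 f = 0"
  by (rule poly_mapping_eqI) (simp add: lookup_scal)

lemma scal_mon [simp]: "scal a (mon u c) = mon u (a * c)"
  by (rule poly_mapping_eqI) (simp add: lookup_scal mon_def lookup_single when_def)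

lemma sandwich_superset:
  assumes "finite K" "Poly_Mapping.keys f \<subseteq> K"
  shows "sandwich L f R = (\<Sum>u\<in>K. Poly_Mapping.single (L @ u @ R) (Poly_Mapping.lookup f u))"
  unfolding sandwich_def
  by (rule sum.mono_neutral_left) (use assms in \<open>auto simp: in_keys_iff\<close>)

lemma sandwich_diff: "sandwich L (f - g :: 'a::ab_group_add falg) R = sandwich L f R - sandwich L g R"
proof -
  let ?K = "Poly_Mapping.keys f \<union> Poly_Mapping.keys g"
  have "Poly_Mapping.keys (f - g) \<subseteq> ?K"
    by (auto simp: in_keys_iff lookup_minus)
  then show ?thesis
    using sandwich_superset[of ?K "f - g"] sandwich_superset[of ?K f] sandwich_superset[of ?K g]
    by (simp add: lookup_minus single_diff sum_subtractf)
qed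

lemma sandwich_mon [simp]: "sandwich L (mon u c) R = mon (L @ u @ R) c"
  by (cases "c = 0") (simp_all add: sandwich_def mon_def)

lemma red_mon:
  "red L \<mu> R (mon w c) = (if w = L @ fst \<mu> @ R then scal c (sandwich L (snd \<mu>) R) else mon w c)"
  by (auto simp: red_def mon_def lookup_single when_def)

lemma red_mon_other_length:
  "length w \<noteq> length L + length (fst \<mu>) + length R \<Longrightarrow> red L \<mu> R (mon w c) = mon w c"
  by (auto simp: red_mon)

lemma red_diff: "red L \<mu> R (f - g) = red L \<mu> R f - red L \<mu> R g"
  by (simp add: red_def Let_def lookup_minus single_diff scal_diff_left algebra_simps)

lemma reds_comp: "\<psi> \<in> reds S \<Longrightarrow> \<phi> \<in> reds S \<Longrightarrow> \<psi> \<circ> \<phi> \<in> reds S"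
  by (induction rule: reds.induct) (auto simp: comp_assoc intro: reds.intros)

lemma reds_red: "\<mu> \<in> S \<Longrightarrow> red L \<mu> R \<in> reds S"
  using reds_step[OF reds_id] by simp

lemma reds_diff: "\<phi> \<in> reds S \<Longrightarrow> \<phi> (f - g) = \<phi> f - \<phi> g"
  by (induction rule: reds.induct) (auto simp: red_diff)

lemma reds_comp_diff_mon:
  assumes "\<phi> \<in> reds S" "\<psi> \<in> reds S"
    and "\<phi> (mon u c) = mon u' c'" "\<phi> (mon v d) = mon v d"
    and "\<psi> (mon u' c') = mon u' c'" "\<psi> (mon v d) = mon v' d'"
  shows "(\<psi> \<circ> \<phi>) (mon u c - mon v d) = mon u' c' - mon v' d'"
  using assms by (simp add: reds_diff)

lemma overlap_resolvableI:
  "lam \<in> reds S \<Longrightarrow> \<rho> \<in> reds S \<Longrightarrow> lam (sandwich [] (snd \<mu>) R) = \<rho> (sandwich L (snd \<nu>) [])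
    \<Longrightarrow> overlap_resolvable S \<mu> \<nu> L X R"
  unfolding overlap_resolvable_def by blast

definition rule_alpha :: "'a::field \<Rightarrow> 'a \<Rightarrow> 'a rule" where
  "rule_alpha m b = ([LA, LB], scal (1 / (m - 1)) (mon [LC] m - mon [] b))"

definition rule_beta :: "'a::field \<Rightarrow> 'a rule" where
  "rule_beta m = ([LA, LC], mon [LC, LA] m)"

definition rule_gamma :: "'a::field \<Rightarrow> 'a \<Rightarrow> 'a rule" where
  "rule_gamma m b = ([LB, LA], scal (1 / (m - 1)) (mon [LC] 1 - mon [] b))"

definition rule_delta :: "'a::field \<Rightarrow> 'a rule" where
  "rule_delta m = ([LC, LB], mon [LB, LC] m)"

definition rule_eps :: "'a::field \<Rightarrow> 'a \<Rightarrow> nat \<Rightarrow> 'a rule" where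
  "rule_eps m b k = (LB # replicate k LC @ [LA],
     scal (1 / (m ^ k * (m - 1))) (mon (replicate (k + 1) LC) 1 - mon (replicate k LC) b))"

lemma fst_rules [simp]:
  "fst (rule_alpha m b) = [LA, LB]" "fst (rule_beta m) = [LA, LC]"
  "fst (rule_gamma m b) = [LB, LA]" "fst (rule_delta m) = [LC, LB]"
  "fst (rule_eps m b k) = LB # replicate k LC @ [LA]"
  by (simp_all add: rule_alpha_def rule_beta_def rule_gamma_def rule_delta_def rule_eps_def)

lemma snd_rules:
  "snd (rule_alpha m b) = scal (1 / (m - 1)) (mon [LC] m - mon [] b)"
  "snd (rule_beta m) = mon [LC, LA] m"
  "snd (rule_gamma m b) = scal (1 / (m - 1)) (mon [LC] 1 - mon [] b)"
  "snd (rule_delta m) = mon [LB, LC] m"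
  "snd (rule_eps m b k) =
     scal (1 / (m ^ k * (m - 1))) (mon (replicate (k + 1) LC) 1 - mon (replicate k LC) b)"
  by (simp_all add: rule_alpha_def rule_beta_def rule_gamma_def rule_delta_def rule_eps_def)

lemma Gamma_eq:
  "Gamma m b = {rule_alpha m b, rule_beta m, rule_gamma m b, rule_delta m} \<union> {rule_eps m b k | k. k \<ge> 1}"
  by (simp add: Gamma_def rule_alpha_def rule_beta_def rule_gamma_def rule_delta_def rule_eps_def)

lemma rules_in_Gamma:
  "rule_alpha m b \<in> Gamma m b" "rule_beta m \<in> Gamma m b" "rule_gamma m b \<in> Gamma m b"
  "rule_delta m \<in> Gamma m b" "k \<ge> 1 \<Longrightarrow> rule_eps m b k \<in> Gamma m b"
  by (auto simp: Gamma_eq)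

lemma Gamma_cases:
  assumes "\<mu> \<in> Gamma m b"
  obtains "\<mu> = rule_alpha m b" | "\<mu> = rule_beta m" | "\<mu> = rule_gamma m b" | "\<mu> = rule_delta m"
    | k where "k \<ge> 1" "\<mu> = rule_eps m b k"
  using assms by (auto simp: Gamma_eq)

lemmas reds_Gamma = rules_in_Gamma[THEN reds_red]

lemma reds_move_A_right:
  "\<exists>\<phi>\<in>reds (Gamma m b).
     (\<forall>c. \<phi> (mon (P @ LA # replicate j LC) c) = mon (P @ replicate j LC @ [LA]) (m ^ j * c)) \<and>
     (\<forall>u c. length u \<noteq> length P + j + 1 \<longrightarrow> \<phi> (mon u c) = mon u c)"
proof (induction j arbitrary: P)
  case 0
  show ?case by (rule bexI[of _ id]) (simp_all add: reds_id)
next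
  case (Suc j)
  obtain \<phi> where \<phi>: "\<phi> \<in> reds (Gamma m b)"
    and move: "\<forall>c. \<phi> (mon (P @ LC # LA # replicate j LC) c) = mon (P @ LC # replicate j LC @ [LA]) (m ^ j * c)"
    and stable: "\<forall>u c. length u \<noteq> length P + j + 2 \<longrightarrow> \<phi> (mon u c) = mon u c"
    using Suc.IH[of "P @ [LC]"] by auto
  let ?r = "red P (rule_beta m) (replicate j LC)"
  have "\<phi> \<circ> ?r \<in> reds (Gamma m b)"
    using \<phi> by (intro reds_comp reds_Gamma)
  moreover have "(\<phi> \<circ> ?r) (mon (P @ LA # replicate (Suc j) LC) c) =
      mon (P @ replicate (Suc j) LC @ [LA]) (m ^ Suc j * c)" for c
    using move by (simp add: red_mon snd_rules replicate_app_Cons_same mult_ac)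
  moreover have "(\<phi> \<circ> ?r) (mon u c) = mon u c" if "length u \<noteq> length P + Suc j + 1" for u c
    using that stable by (simp add: red_mon_other_length)
  ultimately show ?case by blast
qed

lemma reds_move_B_left:
  "\<exists>\<phi>\<in>reds (Gamma m b).
     (\<forall>c. \<phi> (mon (replicate j LC @ LB # Q) c) = mon (LB # replicate j LC @ Q) (m ^ j * c)) \<and>
     (\<forall>u c. length u \<noteq> j + 1 + length Q \<longrightarrow> \<phi> (mon u c) = mon u c)"
proof (induction j arbitrary: Q)
  case 0
  show ?case by (rule bexI[of _ id]) (simp_all add: reds_id)
next
  case (Suc j)
  obtain \<phi> where \<phi>: "\<phi> \<in> reds (Gamma m b)"
    and move: "\<forall>c. \<phi> (mon (replicate j LC @ LB # LC # Q) c) = mon (LB # replicate j LC @ LC # Q) (m ^ j * c)"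
    and stable: "\<forall>u c. length u \<noteq> j + 2 + length Q \<longrightarrow> \<phi> (mon u c) = mon u c"
    using Suc.IH[of "LC # Q"] by auto
  let ?r = "red (replicate j LC) (rule_delta m) Q"
  have "\<phi> \<circ> ?r \<in> reds (Gamma m b)"
    using \<phi> by (intro reds_comp reds_Gamma)
  moreover have "(\<phi> \<circ> ?r) (mon (replicate (Suc j) LC @ LB # Q) c) =
      mon (LB # replicate (Suc j) LC @ Q) (m ^ Suc j * c)" for c
  proof -
    have "replicate (Suc j) LC @ LB # Q = replicate j LC @ [LC, LB] @ Q"
      by (simp add: replicate_append_same[symmetric])
    then show ?thesis
      using move by (simp add: red_mon snd_rules replicate_app_Cons_same mult_ac)
  qed
  moreover have "(\<phi> \<circ> ?r) (mon u c) = mon u c" if "length u \<noteq> Suc j + 1 + length Q" for u c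
    using that stable by (simp add: red_mon_other_length)
  ultimately show ?case by blast
qed

lemmas reduction_simps = snd_rules scal_diff sandwich_diff red_diff red_mon
  replicate_app_Cons_same replicate_append_same

lemma resolvable_alpha_gamma: "overlap_resolvable (Gamma m b) (rule_alpha m b) (rule_gamma m b) [LA] X [LA]"
  by (rule overlap_resolvableI[where lam=id and \<rho>="red [] (rule_beta m) []"])
    (simp_all add: reds_id reds_Gamma reduction_simps mult_ac)

lemma resolvable_beta_delta: "overlap_resolvable (Gamma m b) (rule_beta m) (rule_delta m) [LA] X [LB]"
  by (rule overlap_resolvableI[where lam="red [LC] (rule_alpha m b) []" and \<rho>="red [] (rule_alpha m b) [LC]"])
    (simp_all add: reds_Gamma reduction_simps mult_ac)

lemma resolvable_gamma_alpha: "overlap_resolvable (Gamma m b) (rule_gamma m b) (rule_alpha m b) [LB] X [LB]"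
  by (rule overlap_resolvableI[where lam="red [] (rule_delta m) []" and \<rho>=id])
    (simp_all add: reds_id reds_Gamma reduction_simps mult_ac)

lemma resolvable_gamma_beta:
  "m \<noteq> 0 \<Longrightarrow> overlap_resolvable (Gamma m b) (rule_gamma m b) (rule_beta m) [LB] X [LC]"
  by (rule overlap_resolvableI[where lam=id and \<rho>="red [] (rule_eps m b 1) []"])
    (simp_all add: reds_id reds_Gamma reduction_simps mult_ac)

lemma resolvable_delta_gamma:
  "m \<noteq> 0 \<Longrightarrow> overlap_resolvable (Gamma m b) (rule_delta m) (rule_gamma m b) [LC] X [LA]"
  by (rule overlap_resolvableI[where lam="red [] (rule_eps m b 1) []" and \<rho>=id])
    (simp_all add: reds_id reds_Gamma reduction_simps mult_ac)

lemma resolvable_delta_eps: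
  assumes "m \<noteq> 0"
  shows "overlap_resolvable (Gamma m b) (rule_delta m) (rule_eps m b k) [LC] X (replicate k LC @ [LA])"
proof (rule overlap_resolvableI[where lam="red [] (rule_eps m b (Suc k)) []" and \<rho>=id])
  have "m * (c / (m ^ Suc k * (m - 1))) = c / (m ^ k * (m - 1))" for c
    using assms by (simp add: mult.assoc)
  then show "red [] (rule_eps m b (Suc k)) [] (sandwich [] (snd (rule_delta m)) (replicate k LC @ [LA])) =
    id (sandwich [LC] (snd (rule_eps m b k)) [])"
    by (simp add: reduction_simps)
qed (simp_all add: reds_id reds_Gamma)

lemma resolvable_eps_beta:
  assumes "m \<noteq> 0"
  shows "overlap_resolvable (Gamma m b) (rule_eps m b k) (rule_beta m) (LB # replicate k LC) X [LC]"
proof (rule overlap_resolvableI[where lam=id and \<rho>="red [] (rule_eps m b (Suc k)) []"])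
  have "m * (c / (m ^ Suc k * (m - 1))) = c / (m ^ k * (m - 1))" for c
    using assms by (simp add: mult.assoc)
  then show "id (sandwich [] (snd (rule_eps m b k)) [LC]) =
    red [] (rule_eps m b (Suc k)) [] (sandwich (LB # replicate k LC) (snd (rule_beta m)) [])"
    by (simp add: reduction_simps)
qed (simp_all add: reds_id reds_Gamma)

lemma resolvable_alpha_eps:
  assumes "m \<noteq> 0"
  shows "overlap_resolvable (Gamma m b) (rule_alpha m b) (rule_eps m b k) [LA] X (replicate k LC @ [LA])"
proof -
  obtain \<phi> where \<phi>: "\<phi> \<in> reds (Gamma m b)"
    and move\<phi>: "\<forall>c. \<phi> (mon (LA # replicate (Suc k) LC) c) = mon (replicate (Suc k) LC @ [LA]) (m ^ Suc k * c)"
    and stable\<phi>: "\<forall>u c. length u \<noteq> k + 2 \<longrightarrow> \<phi> (mon u c) = mon u c"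
    using reds_move_A_right[of m b "[]" "Suc k"] by auto
  obtain \<psi> where \<psi>: "\<psi> \<in> reds (Gamma m b)"
    and move\<psi>: "\<forall>c. \<psi> (mon (LA # replicate k LC) c) = mon (replicate k LC @ [LA]) (m ^ k * c)"
    and stable\<psi>: "\<forall>u c. length u \<noteq> k + 1 \<longrightarrow> \<psi> (mon u c) = mon u c"
    using reds_move_A_right[of m b "[]" k] by auto
  have "m ^ Suc k * (1 / (m ^ k * (m - 1))) = m / (m - 1)" "m ^ k * (b / (m ^ k * (m - 1))) = b / (m - 1)"
    using assms by (simp_all add: mult.assoc)
  then have "(\<psi> \<circ> \<phi>) (sandwich [LA] (snd (rule_eps m b k)) []) =
      mon (LC # replicate k LC @ [LA]) (m / (m - 1)) - mon (replicate k LC @ [LA]) (b / (m - 1))"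
    using reds_comp_diff_mon[OF \<phi> \<psi>] move\<phi> move\<psi> stable\<phi> stable\<psi> by (simp add: reduction_simps)
  then show ?thesis
    by (intro overlap_resolvableI[where lam=id and \<rho>="\<psi> \<circ> \<phi>"] reds_id reds_comp \<phi> \<psi>)
      (simp add: reduction_simps)
qed

lemma resolvable_eps_alpha:
  assumes "m \<noteq> 0"
  shows "overlap_resolvable (Gamma m b) (rule_eps m b k) (rule_alpha m b) (LB # replicate k LC) X [LB]"
proof -
  obtain \<phi> where \<phi>: "\<phi> \<in> reds (Gamma m b)"
    and move\<phi>: "\<forall>c. \<phi> (mon (replicate (Suc k) LC @ [LB]) c) = mon (LB # replicate (Suc k) LC) (m ^ Suc k * c)"
    and stable\<phi>: "\<forall>u c. length u \<noteq> k + 2 \<longrightarrow> \<phi> (mon u c) = mon u c"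
    using reds_move_B_left[of m b "Suc k" "[]"] by auto
  obtain \<psi> where \<psi>: "\<psi> \<in> reds (Gamma m b)"
    and move\<psi>: "\<forall>c. \<psi> (mon (replicate k LC @ [LB]) c) = mon (LB # replicate k LC) (m ^ k * c)"
    and stable\<psi>: "\<forall>u c. length u \<noteq> k + 1 \<longrightarrow> \<psi> (mon u c) = mon u c"
    using reds_move_B_left[of m b k "[]"] by auto
  have "m ^ Suc k * (1 / (m ^ k * (m - 1))) = m / (m - 1)" "m ^ k * (b / (m ^ k * (m - 1))) = b / (m - 1)"
    using assms by (simp_all add: mult.assoc)
  then have "(\<psi> \<circ> \<phi>) (sandwich [] (snd (rule_eps m b k)) [LB]) =
      mon (LB # LC # replicate k LC) (m / (m - 1)) - mon (LB # replicate k LC) (b / (m - 1))"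
    using reds_comp_diff_mon[OF \<phi> \<psi>] move\<phi> move\<psi> stable\<phi> stable\<psi> by (simp add: reduction_simps)
  then show ?thesis
    by (intro overlap_resolvableI[where lam="\<psi> \<circ> \<phi>" and \<rho>=id] reds_id reds_comp \<phi> \<psi>)
      (simp add: reduction_simps)
qed

lemma append_eq_two_letters: "L @ X = [a, c] \<Longrightarrow> L \<noteq> [] \<Longrightarrow> X \<noteq> [] \<Longrightarrow> L = [a] \<and> X = [c]"
  by (auto simp: append_eq_Cons_conv)

lemma append_letter_eq_eps_word:
  assumes "L @ [c] = LB # replicate k LC @ [LA]"
  shows "c = LA \<and> L = LB # replicate k LC"
proof -
  from assms have "L @ [c] = (LB # replicate k LC) @ [LA]" by simp
  then show ?thesis by simp
qed

lemma eps_word_overlap_eps_word: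
  assumes "L @ X = LB # replicate k LC @ [LA]" "X @ R = LB # Y" "L \<noteq> []" "X \<noteq> []"
  shows False
proof -
  from assms(1,3) obtain L' where "L' @ X = replicate k LC @ [LA]"
    by (cases L) auto
  then have "set X \<subseteq> set (replicate k LC @ [LA])"
    by (metis Un_upper2 set_append)
  moreover have "LB \<in> set X"
    using assms(2,4) by (cases X) auto
  ultimately show False by auto
qed

lemma overlap_amb_Gamma_cases:
  assumes "overlap_amb (Gamma m b) \<mu> \<nu> L X R"
  obtains "\<mu> = rule_alpha m b" "\<nu> = rule_gamma m b" "L = [LA]" "R = [LA]"
    | k where "k \<ge> 1" "\<mu> = rule_alpha m b" "\<nu> = rule_eps m b k" "L = [LA]" "R = replicate k LC @ [LA]"
    | "\<mu> = rule_beta m" "\<nu> = rule_delta m" "L = [LA]" "R = [LB]"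
    | "\<mu> = rule_gamma m b" "\<nu> = rule_alpha m b" "L = [LB]" "R = [LB]"
    | "\<mu> = rule_gamma m b" "\<nu> = rule_beta m" "L = [LB]" "R = [LC]"
    | "\<mu> = rule_delta m" "\<nu> = rule_gamma m b" "L = [LC]" "R = [LA]"
    | k where "k \<ge> 1" "\<mu> = rule_delta m" "\<nu> = rule_eps m b k" "L = [LC]" "R = replicate k LC @ [LA]"
    | k where "k \<ge> 1" "\<mu> = rule_eps m b k" "\<nu> = rule_alpha m b" "L = LB # replicate k LC" "R = [LB]"
    | k where "k \<ge> 1" "\<mu> = rule_eps m b k" "\<nu> = rule_beta m" "L = LB # replicate k LC" "R = [LC]"
proof -
  from assms have \<mu>: "\<mu> \<in> Gamma m b" and \<nu>: "\<nu> \<in> Gamma m b" and ne: "L \<noteq> []" "X \<noteq> []" "R \<noteq> []"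
    and LX: "L @ X = fst \<mu>" and XR: "X @ R = fst \<nu>"
    by (auto simp: overlap_amb_def)
  from \<mu> show thesis
  proof (cases rule: Gamma_cases)
    case 1
    with LX ne have "L = [LA]" "X = [LB]" by (auto dest: append_eq_two_letters)
    with \<nu> XR 1 show thesis by (cases rule: Gamma_cases) (auto intro: that(1,2))
  next
    case 2
    with LX ne have "L = [LA]" "X = [LC]" by (auto dest: append_eq_two_letters)
    with \<nu> XR 2 show thesis by (cases rule: Gamma_cases) (auto intro: that(3))
  next
    case 3
    with LX ne have "L = [LB]" "X = [LA]" by (auto dest: append_eq_two_letters)
    with \<nu> XR 3 show thesis by (cases rule: Gamma_cases) (auto intro: that(4,5))
  next
    case 4
    with LX ne have "L = [LC]" "X = [LB]" by (auto dest: append_eq_two_letters)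
    with \<nu> XR 4 show thesis by (cases rule: Gamma_cases) (auto intro: that(6,7))
  next
    case (5 k)
    note \<mu>_eps = this
    from \<nu> show thesis
    proof (cases rule: Gamma_cases)
      case (5 j)
      with \<mu>_eps LX XR ne have False by (auto intro: eps_word_overlap_eps_word)
      then show thesis ..
    qed (use \<mu>_eps LX XR ne in \<open>auto dest!: append_eq_two_letters append_letter_eq_eps_word intro: that(8,9)\<close>)
  qed
qed

lemma nth_eps_word:
  "n \<le> j + 1 \<Longrightarrow> (LB # replicate j LC @ [LA]) ! n = (if n = 0 then LB else if n \<le> j then LC else LA)"
  by (cases n) (auto simp: nth_append)

lemma length2_infix_eps_word:
  assumes "L @ [p, q] @ R = LB # replicate j LC @ [LA]" "j \<ge> 1"
  shows "(p, q) \<in> {(LB, LC), (LC, LC), (LC, LA)}"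
proof -
  have len: "length L + 2 + length R = j + 2"
    using arg_cong[OF assms(1), of length] by simp
  have "(LB # replicate j LC @ [LA]) ! length L = p" "(LB # replicate j LC @ [LA]) ! (length L + 1) = q"
    unfolding assms(1)[symmetric] by (simp_all add: nth_append)
  then show ?thesis
    using len assms(2) nth_eps_word[of "length L" j] nth_eps_word[of "length L + 1" j]
    by (auto split: if_splits)
qed

lemma eps_word_infix_eps_word:
  assumes "L @ (LB # replicate k LC @ [LA]) @ R = LB # replicate j LC @ [LA]"
  shows "L = [] \<and> R = []"
proof -
  have len: "length L + k + 2 + length R = j + 2"
    using arg_cong[OF assms, of length] by simp
  have "(LB # replicate j LC @ [LA]) ! length L = LB"
    unfolding assms[symmetric] by (simp add: nth_append)
  then have "L = []"
    using len nth_eps_word[of "length L" j] by (auto split: if_splits)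
  have "(LB # replicate j LC @ [LA]) ! (k + 1) = LA"
    unfolding assms[symmetric] \<open>L = []\<close> by (simp add: nth_append)
  then have "\<not> k + 1 \<le> j"
    using len nth_eps_word[of "k + 1" j] by (auto split: if_splits)
  then have "length R = 0"
    using len by linarith
  with \<open>L = []\<close> show ?thesis
    by simp
qed

lemma length_fst_Gamma: "\<mu> \<in> Gamma m b \<Longrightarrow> 2 \<le> length (fst \<mu>)"
  by (auto simp: Gamma_eq)

lemma inj_on_fst_Gamma: "inj_on fst (Gamma m b)"
  by (auto simp: inj_on_def Gamma_def dest: arg_cong[where f = length])

lemma Gamma_no_incl_amb: "\<not> incl_amb (Gamma m b) \<mu> \<nu> L X R"
proof
  assume "incl_amb (Gamma m b) \<mu> \<nu> L X R"
  then have \<mu>: "\<mu> \<in> Gamma m b" and \<nu>: "\<nu> \<in> Gamma m b" and "\<mu> \<noteq> \<nu>"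
    and X: "fst \<mu> = X" and LXR: "fst \<nu> = L @ X @ R"
    by (auto simp: incl_amb_def)
  have "L = [] \<and> R = []"
    using \<nu>
  proof (cases rule: Gamma_cases)
    case (5 j)
    with LXR have word: "L @ X @ R = LB # replicate j LC @ [LA]"
      by simp
    from \<mu> show ?thesis
    proof (cases rule: Gamma_cases)
      case (5 k)
      with X word eps_word_infix_eps_word[of L k R j] show ?thesis by simp
    qed (use X word length2_infix_eps_word[of L _ _ R j] \<open>j \<ge> 1\<close> in force)+
  qed (use length_fst_Gamma[OF \<mu>] X arg_cong[where f = length, OF LXR] in \<open>auto simp flip: length_0_conv\<close>)
  with X LXR have "fst \<mu> = fst \<nu>"
    by simp
  with inj_on_fst_Gamma \<mu> \<nu> \<open>\<mu> \<noteq> \<nu>\<close> show False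
    by (auto dest: inj_onD)
qed

theorem lemma3p2:
  fixes m b :: "'a::field"
  assumes "m \<noteq> 0" and "m \<noteq> 1"
  shows "(\<forall>\<mu> \<nu> L X R. \<not> incl_amb (Gamma m b) \<mu> \<nu> L X R) \<and>
         (\<forall>\<mu> \<nu> L X R. overlap_amb (Gamma m b) \<mu> \<nu> L X R \<longrightarrow>
              overlap_resolvable (Gamma m b) \<mu> \<nu> L X R)"
proof (intro conjI allI impI)
  \<comment> \<open>\<open>m \<noteq> 1\<close> is not needed: for \<open>m = 1\<close> the junk value \<open>x / 0 = 0\<close> turns \<open>\<alpha>\<close>, \<open>\<gamma>\<close> and all
    \<open>\<epsilon>(k)\<close> into reductions to \<open>0\<close>, and the same joins still work.\<close>
  show "\<not> incl_amb (Gamma m b) \<mu> \<nu> L X R" for \<mu> \<nu> L X R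
    by (rule Gamma_no_incl_amb)
  show "overlap_resolvable (Gamma m b) \<mu> \<nu> L X R" if "overlap_amb (Gamma m b) \<mu> \<nu> L X R" for \<mu> \<nu> L X R
    using that
    by (cases rule: overlap_amb_Gamma_cases)
      (simp_all add: \<open>m \<noteq> 0\<close> resolvable_alpha_gamma resolvable_alpha_eps resolvable_beta_delta
        resolvable_gamma_alpha resolvable_gamma_beta resolvable_delta_gamma resolvable_delta_eps
        resolvable_eps_alpha resolvable_eps_beta)
qed

end
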